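(* Let $G=(V,E,w)$, $s$, $\tau$ (with $|\tau|\ge 2$) and a budget $b\ge 0$ be as in the context, and suppose that at least one feasible subgraph exists. Then \[ \max_{\substack{S\subseteq G \text{ feasible}}} \textsc{CD}_{\tau,s}(S) \;=\; \max_{\substack{S\in\mathcal{S}(\tau,s)\\ w(S)\le b}} \textsc{CD}_{\tau,s}(S), \] and in particular there is an optimal solution $S^\star\in\mathcal{S}(\tau,s)$ with $w(S^\star)\le b$.
   Context: Let $G=(V,E,w)$ be a finite directed graph with non-negative edge weights $w:E\to\mathbb{R}_{\ge 0}$. A path from $u$ to $v$ in a subgraph $S\subseteq G$ is a sequence $u=v_0\to v_1\to\cdots\to v_k=v$ ($k\ge 0$) with each $v_i\to v_{i+1}$ an edge of $S$; for $i\le j$, $w_P(v_i,v_j)=\sum_{m=i}^{j-1} w(v_m\to v_{m+1})$. A vertex $y$ is reachable from $x$ in $S$ if there is a path from $x$ to $y$ in $S$ (a vertex is reachable from itself). Fix a start vertex $s\in V$ and a finite target set $\tau\subseteq V\setminus\{s\}$ with $|\tau|\ge 2$. The cost of a subgraph $S$ is $w(S)=\sum_{e\in E(S)} w(e)$. For a subgraph $S$ containing $s$ and $\tau$ in which every target is reachable from $s$: for a path $P=v_0\to\cdots\to v_k$ in $S$ with $v_0=s$, $v_k=t\in\tau$, let $\ell$ be the largest index such that some target in $\tau\setminus\{t\}$ is reachable from $v_\ell$ in $S$; the last deceptive point is $l(P,t)=v_\ell$. The unique distance of $t\in\tau$ is $\textsc{U}_S(t)=\min\{w_P(l(P,t),t):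 P \text{ a path in } S \text{ from } s \text{ to } t\}$, and the counterdeceptiveness of $S$ is $\textsc{CD}_{\tau,s}(S)=\min_{t\in\tau}\textsc{U}_S(t)$. Given a budget $b\ge 0$, a subgraph $S\subseteq G$ is feasible if $s\in V(S)$, $\tau\subseteq V(S)$, every target is reachable from $s$ in $S$, and $w(S)\le b$. $\mathcal{S}(\tau,s)$ denotes the set of Steiner trees in $G$ rooted at $s$ with leaves in $\tau$: subgraphs $S\subseteq G$ that are out-arborescences rooted at $s$ (underlying undirected graph a tree, $s$ of in-degree $0$, every other vertex of in-degree $1$), with $\tau\subseteq V(S)$, and such that every leaf (vertex other than $s$ of out-degree $0$) belongs to $\tau$. *)

theory Defs
  imports Complex_Main
begin

type_synonym 'v sgraph = "'v set \<times> ('v \<times> 'v) set"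

definition verts :: "'v sgraph \<Rightarrow> 'v set" where "verts S = fst S"
definition arcs :: "'v sgraph \<Rightarrow> ('v \<times> 'v) set" where "arcs S = snd S"

definition is_subgraph :: "'v set \<Rightarrow> ('v \<times> 'v) set \<Rightarrow> 'v sgraph \<Rightarrow> bool" where
  "is_subgraph V E S \<longleftrightarrow> verts S \<subseteq> V \<and> arcs S \<subseteq> E \<and> arcs S \<subseteq> verts S \<times> verts S"

definition cost :: "('v \<times> 'v \<Rightarrow> real) \<Rightarrow> 'v sgraph \<Rightarrow> real" where
  "cost w S = (\<Sum>e\<in>arcs S. w e)"

definition is_path :: "'v sgraph \<Rightarrow> 'v list \<Rightarrow> bool" where
  "is_path S xs \<longleftrightarrow> xs \<noteq> [] \<and> set xs \<subseteq> verts S \<and>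
     (\<forall>i. Suc i < length xs \<longrightarrow> (xs ! i, xs ! Suc i) \<in> arcs S)"

definition path_weight :: "('v \<times> 'v \<Rightarrow> real) \<Rightarrow> 'v list \<Rightarrow> nat \<Rightarrow> nat \<Rightarrow> real" where
  "path_weight w xs i j = (\<Sum>m\<in>{i..<j}. w (xs ! m, xs ! Suc m))"

definition reachable :: "'v sgraph \<Rightarrow> 'v \<Rightarrow> 'v \<Rightarrow> bool" where
  "reachable S x y \<longleftrightarrow> (\<exists>xs. is_path S xs \<and> hd xs = x \<and> last xs = y)"

definition ldp_index :: "'v sgraph \<Rightarrow> 'v set \<Rightarrow> 'v \<Rightarrow> 'v list \<Rightarrow> nat" where
  "ldp_index S \<tau> t xs = (GREATEST i. i < length xs \<and> (\<exists>t'\<in>\<tau> - {t}. reachable S (xs ! i) t'))"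

text \<open>Unique distance U_S(t): minimum (infimum, which is attained) over paths P from s to t
  of w_P(l(P,t), t).\<close>
definition unique_dist :: "('v \<times> 'v \<Rightarrow> real) \<Rightarrow> 'v set \<Rightarrow> 'v \<Rightarrow> 'v sgraph \<Rightarrow> 'v \<Rightarrow> real" where
  "unique_dist w \<tau> s S t = Inf {path_weight w xs (ldp_index S \<tau> t xs) (length xs - 1) | xs.
       is_path S xs \<and> hd xs = s \<and> last xs = t}"

definition CD :: "('v \<times> 'v \<Rightarrow> real) \<Rightarrow> 'v set \<Rightarrow> 'v \<Rightarrow> 'v sgraph \<Rightarrow> real" where
  "CD w \<tau> s S = Min (unique_dist w \<tau> s S ` \<tau>)"

definition feasible :: "'v set \<Rightarrow> ('v \<times> 'v) set \<Rightarrow> ('v \<times> 'v \<Rightarrow> real) \<Rightarrow> 'v set \<Rightarrow> 'v \<Rightarrow> real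
    \<Rightarrow> 'v sgraph \<Rightarrow> bool" where
  "feasible V E w \<tau> s b S \<longleftrightarrow> is_subgraph V E S \<and> s \<in> verts S \<and> \<tau> \<subseteq> verts S \<and>
     (\<forall>t\<in>\<tau>. reachable S s t) \<and> cost w S \<le> b"

text \<open>An undirected cycle is a cyclic sequence of k >= 1 distinct vertices joined by k distinct
  arcs of S (each arc used in either direction); k = 1 is a loop, k = 2 a pair of
  antiparallel arcs.\<close>
definition und_connected :: "'v sgraph \<Rightarrow> bool" where
  "und_connected S \<longleftrightarrow> (\<forall>u\<in>verts S. \<forall>v\<in>verts S.
      (u, v) \<in> (arcs S \<union> (arcs S)\<inverse>)\<^sup>*)"

definition und_cycle :: "'v sgraph \<Rightarrow> 'v list \<Rightarrow> ('v \<times> 'v) list \<Rightarrow> bool" where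
  "und_cycle S vs as \<longleftrightarrow> length vs \<ge> 1 \<and> length as = length vs \<and> distinct vs \<and> distinct as \<and>
     set as \<subseteq> arcs S \<and>
     (\<forall>i<length vs. as ! i = (vs ! i, vs ! ((i + 1) mod length vs)) \<or>
                    as ! i = (vs ! ((i + 1) mod length vs), vs ! i))"

definition und_tree :: "'v sgraph \<Rightarrow> bool" where
  "und_tree S \<longleftrightarrow> verts S \<noteq> {} \<and> und_connected S \<and> (\<nexists>vs as. und_cycle S vs as)"

definition out_arborescence :: "'v sgraph \<Rightarrow> 'v \<Rightarrow> bool" where
  "out_arborescence S s \<longleftrightarrow> und_tree S \<and> s \<in> verts S \<and>
     card {u. (u, s) \<in> arcs S} = 0 \<and>
     (\<forall>v\<in>verts S - {s}. card {u. (u, v) \<in> arcs S} = 1)"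

definition steiner_trees :: "'v set \<Rightarrow> ('v \<times> 'v) set \<Rightarrow> 'v set \<Rightarrow> 'v \<Rightarrow> 'v sgraph set" where
  "steiner_trees V E \<tau> s = {S. is_subgraph V E S \<and> out_arborescence S s \<and> \<tau> \<subseteq> verts S \<and>
      (\<forall>v\<in>verts S - {s}. (\<nexists>x. (v, x) \<in> arcs S) \<longrightarrow> v \<in> \<tau>)}"

end

theory Submission
  imports Defs
begin

text \<open>Passing to a larger subgraph can only lower the counterdeceptiveness: every path persists,
  and since reachability only grows, the last deceptive point of a path can only move towards its
  end, which shortens the (nonnegatively weighted) suffix measured by the unique distance.  Hence it
  suffices to shrink a feasible subgraph to an inclusion-minimal subgraph in which all targets are
  still reachable from s.  Minimality forces such a subgraph to be a Steiner tree: every vertex is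
  reachable from s, no arc enters s, no vertex has two incoming arcs, every sink is a target, and a
  subgraph with these properties has no undirected cycle.\<close>

lemma verts_pair [simp]: "verts (V, A) = V"
  by (simp add: verts_def)

lemma arcs_pair [simp]: "arcs (V, A) = A"
  by (simp add: arcs_def)

definition subgraph_of :: "'v sgraph \<Rightarrow> 'v sgraph \<Rightarrow> bool" where
  "subgraph_of T S \<longleftrightarrow> verts T \<subseteq> verts S \<and> arcs T \<subseteq> arcs S"

lemma is_path_rtrancl:
  assumes "is_path S xs" "i < length xs"
  shows "(xs ! 0, xs ! i) \<in> (arcs S)\<^sup>*"
  using assms(2)
proof (induction i)
  case (Suc i)
  then have "(xs ! i, xs ! Suc i) \<in> arcs S"
    using assms(1) by (simp add: is_path_def)
  with Suc show ?case
    by (meson Suc_lessD rtrancl.rtrancl_into_rtrancl)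
qed simp

lemma is_path_snoc:
  assumes "is_path S xs" "(last xs, z) \<in> arcs S" "z \<in> verts S"
  shows "is_path S (xs @ [z])"
  unfolding is_path_def
proof (intro conjI allI impI)
  show "set (xs @ [z]) \<subseteq> verts S"
    using assms by (auto simp: is_path_def)
  fix i assume i: "Suc i < length (xs @ [z])"
  show "((xs @ [z]) ! i, (xs @ [z]) ! Suc i) \<in> arcs S"
  proof (cases "Suc i < length xs")
    case True
    then show ?thesis using assms(1) by (simp add: nth_append is_path_def)
  next
    case False
    with i have "i = length xs - 1" "Suc i = length xs" by simp_all
    moreover have "xs \<noteq> []" using assms(1) by (simp add: is_path_def)
    ultimately show ?thesis
      using assms(2) by (simp add: nth_append last_conv_nth)
  qed
qed simp

lemma reachable_iff_rtrancl:
  assumes "arcs S \<subseteq> verts S \<times> verts S"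
  shows "reachable S x y \<longleftrightarrow> x \<in> verts S \<and> (x, y) \<in> (arcs S)\<^sup>*"
proof
  assume "reachable S x y"
  then obtain xs where p: "is_path S xs" "hd xs = x" "last xs = y"
    by (auto simp: reachable_def)
  then have "xs \<noteq> []" by (simp add: is_path_def)
  with p is_path_rtrancl[OF p(1), of "length xs - 1"]
  show "x \<in> verts S \<and> (x, y) \<in> (arcs S)\<^sup>*"
    by (auto simp: is_path_def hd_conv_nth last_conv_nth)
next
  assume "x \<in> verts S \<and> (x, y) \<in> (arcs S)\<^sup>*"
  then have x: "x \<in> verts S" and xy: "(x, y) \<in> (arcs S)\<^sup>*" by auto
  from xy show "reachable S x y"
  proof (induction rule: rtrancl_induct)
    case base
    have "is_path S [x]" using x by (simp add: is_path_def)
    then show ?case unfolding reachable_def by force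
  next
    case (step y z)
    then obtain xs where p: "is_path S xs" "hd xs = x" "last xs = y"
      by (auto simp: reachable_def)
    have "is_path S (xs @ [z])"
      using p step.hyps(2) assms by (intro is_path_snoc) auto
    moreover have "hd (xs @ [z]) = x"
      using p by (simp add: is_path_def)
    ultimately show ?case unfolding reachable_def by force
  qed
qed

lemma is_path_mono: "is_path T xs \<Longrightarrow> subgraph_of T S \<Longrightarrow> is_path S xs"
  unfolding is_path_def subgraph_of_def by blast

lemma reachable_mono: "reachable T x y \<Longrightarrow> subgraph_of T S \<Longrightarrow> reachable S x y"
  unfolding reachable_def using is_path_mono by blast

lemma path_weight_nonneg:
  assumes "is_path S xs" "\<forall>e\<in>arcs S. w e \<ge> 0" "j < length xs"
  shows "path_weight w xs i j \<ge> 0"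
  unfolding path_weight_def
proof (rule sum_nonneg)
  fix m assume "m \<in> {i..<j}"
  then have "(xs ! m, xs ! Suc m) \<in> arcs S"
    using assms(1,3) by (simp add: is_path_def)
  then show "w (xs ! m, xs ! Suc m) \<ge> 0" using assms(2) by blast
qed

lemma path_weight_antimono:
  assumes "is_path S xs" "\<forall>e\<in>arcs S. w e \<ge> 0" "i \<le> i'" "j < length xs"
  shows "path_weight w xs i' j \<le> path_weight w xs i j"
  unfolding path_weight_def
proof (rule sum_mono2)
  fix m assume "m \<in> {i..<j} - {i'..<j}"
  then have "(xs ! m, xs ! Suc m) \<in> arcs S"
    using assms(1,4) by (auto simp: is_path_def)
  then show "w (xs ! m, xs ! Suc m) \<ge> 0" using assms(2) by blast
qed (use assms(3) in auto)

lemma ldp_index_mono: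
  assumes "subgraph_of T S" "is_path T xs" "hd xs = s"
    and "t' \<in> \<tau>" "t' \<noteq> t" "reachable T s t'"
  shows "ldp_index T \<tau> t xs \<le> ldp_index S \<tau> t xs" "ldp_index S \<tau> t xs < length xs"
proof -
  define deceptive where
    "deceptive R i \<longleftrightarrow> i < length xs \<and> (\<exists>t'\<in>\<tau> - {t}. reachable R (xs ! i) t')" for R i
  have bounded: "deceptive R i \<Longrightarrow> i \<le> length xs" for R i
    by (simp add: deceptive_def)
  have ldp: "ldp_index R \<tau> t xs = Greatest (deceptive R)" for R
    by (simp add: ldp_index_def deceptive_def[abs_def])
  have "xs \<noteq> []" using assms(2) by (simp add: is_path_def)
  \<comment> \<open>The second target makes the start deceptive, so the GREATEST below is not a junk value.\<close>
  with assms(3-6) have "deceptive T 0"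
    by (auto simp: deceptive_def hd_conv_nth)
  then have "deceptive T (Greatest (deceptive T))"
    by (rule GreatestI_nat[OF _ bounded])
  then have T_in_S: "deceptive S (Greatest (deceptive T))"
    using reachable_mono[OF _ assms(1)] by (auto simp: deceptive_def)
  then show "ldp_index T \<tau> t xs \<le> ldp_index S \<tau> t xs"
    unfolding ldp by (rule Greatest_le_nat[OF _ bounded])
  from T_in_S have "deceptive S (Greatest (deceptive S))"
    by (rule GreatestI_nat[OF _ bounded])
  then show "ldp_index S \<tau> t xs < length xs"
    unfolding ldp by (simp add: deceptive_def)
qed

lemma unique_dist_antimono:
  assumes "subgraph_of T S" "\<forall>e\<in>arcs S. w e \<ge> 0"
    and "reachable T s t" "t' \<in> \<tau>" "t' \<noteq> t" "reachable T s t'"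
  shows "unique_dist w \<tau> s S t \<le> unique_dist w \<tau> s T t"
  unfolding unique_dist_def
proof (rule cInf_mono)
  show "{path_weight w xs (ldp_index T \<tau> t xs) (length xs - 1) | xs.
          is_path T xs \<and> hd xs = s \<and> last xs = t} \<noteq> {}"
    using assms(3) unfolding reachable_def by blast
  show "bdd_below {path_weight w xs (ldp_index S \<tau> t xs) (length xs - 1) | xs.
          is_path S xs \<and> hd xs = s \<and> last xs = t}"
    using path_weight_nonneg[OF _ assms(2)]
    by (intro bdd_belowI[of _ 0]) (fastforce simp: is_path_def)
next
  fix d assume "d \<in> {path_weight w xs (ldp_index T \<tau> t xs) (length xs - 1) | xs.
                       is_path T xs \<and> hd xs = s \<and> last xs = t}"
  then obtain xs where d: "d = path_weight w xs (ldp_index T \<tau> t xs) (length xs - 1)"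
    and xs: "is_path T xs" "hd xs = s" "last xs = t" by blast
  have xs_S: "is_path S xs" using is_path_mono[OF xs(1) assms(1)] .
  have "path_weight w xs (ldp_index S \<tau> t xs) (length xs - 1) \<le> d"
    unfolding d using ldp_index_mono[OF assms(1) xs(1,2) assms(4-6)] xs_S
    by (intro path_weight_antimono[OF xs_S assms(2)]) (auto simp: is_path_def)
  with xs_S xs show "\<exists>d'\<in>{path_weight w xs (ldp_index S \<tau> t xs) (length xs - 1) | xs.
                       is_path S xs \<and> hd xs = s \<and> last xs = t}. d' \<le> d"
    by blast
qed

lemma CD_antimono:
  assumes "subgraph_of T S" "\<forall>e\<in>arcs S. w e \<ge> 0"
    and "\<forall>t\<in>\<tau>. reachable T s t" "finite \<tau>" "card \<tau> \<ge> 2"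
  shows "CD w \<tau> s S \<le> CD w \<tau> s T"
proof -
  have "\<tau> \<noteq> {}" using assms(5) by auto
  then have "CD w \<tau> s T \<in> unique_dist w \<tau> s T ` \<tau>"
    unfolding CD_def using assms(4) by (intro Min_in) auto
  then obtain t where t: "t \<in> \<tau>" "CD w \<tau> s T = unique_dist w \<tau> s T t" by blast
  have "card (\<tau> - {t}) \<noteq> 0" using assms(5) t(1) by simp
  then obtain t' where t': "t' \<in> \<tau>" "t' \<noteq> t"
    by (metis card.empty ex_in_conv DiffE singletonI)
  have "CD w \<tau> s S \<le> unique_dist w \<tau> s S t"
    unfolding CD_def using assms(4) t(1) by simp
  also have "\<dots> \<le> unique_dist w \<tau> s T t"
    using assms(1-3) t(1) t' by (intro unique_dist_antimono) auto
  finally show ?thesis using t(2) by simp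
qed

definition avoiding :: "'v \<Rightarrow> ('v \<times> 'v) set \<Rightarrow> ('v \<times> 'v) set" where
  "avoiding v A = {a \<in> A. fst a \<noteq> v \<and> snd a \<noteq> v}"

lemma rtrancl_Diff_arc:
  assumes "(s, y) \<in> A\<^sup>*" "(s, v) \<in> (A - {(u, v)})\<^sup>*"
  shows "(s, y) \<in> (A - {(u, v)})\<^sup>*"
  using assms(1)
proof (induction rule: rtrancl_induct)
  case (step y z)
  then show ?case
    using assms(2) by (cases "(y, z) = (u, v)") (auto intro: rtrancl.rtrancl_into_rtrancl)
qed simp

lemma rtrancl_last_arc:
  assumes "(s, v) \<in> A\<^sup>*" "s \<noteq> v"
  obtains u where "(s, u) \<in> {a \<in> A. snd a \<noteq> v}\<^sup>*" "(u, v) \<in> A"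
proof -
  let ?B = "{a \<in> A. snd a \<noteq> v}"
  have "(s, y) \<in> ?B\<^sup>* \<or> (\<exists>u. (s, u) \<in> ?B\<^sup>* \<and> (u, v) \<in> A)" if "(s, y) \<in> A\<^sup>*" for y
    using that
  proof (induction rule: rtrancl_induct)
    case (step y z)
    then show ?case
      by (cases "z = v") (auto intro: rtrancl.rtrancl_into_rtrancl)
  qed simp
  from this[OF assms(1)] show thesis
  proof
    assume "(s, v) \<in> ?B\<^sup>*"
    then show thesis using assms(2) by (cases rule: rtranclE) auto
  qed (use that in blast)
qed

lemma rtrancl_avoiding_unreachable:
  assumes "(s, y) \<in> A\<^sup>*" "(s, v) \<notin> A\<^sup>*"
  shows "(s, y) \<in> (avoiding v A)\<^sup>*"
  using assms(1)
proof (induction rule: rtrancl_induct)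
  case (step y z)
  then have "(y, z) \<in> avoiding v A"
    using assms(2) by (auto simp: avoiding_def intro: rtrancl.rtrancl_into_rtrancl)
  with step.IH show ?case by (rule rtrancl.rtrancl_into_rtrancl)
qed simp

lemma rtrancl_avoiding_sink:
  assumes "(s, y) \<in> A\<^sup>*" "s \<noteq> v" "y \<noteq> v" "\<And>x. (v, x) \<notin> A"
  shows "(s, y) \<in> (avoiding v A)\<^sup>*"
proof -
  have "y = v \<or> (s, y) \<in> (avoiding v A)\<^sup>*" if "(s, y) \<in> A\<^sup>*" for y
    using that
  proof (induction rule: rtrancl_induct)
    case (step y z)
    moreover have "y \<noteq> v" using step.hyps(2) assms(4) by blast
    ultimately show ?case
      by (cases "z = v") (auto simp: avoiding_def intro: rtrancl.rtrancl_into_rtrancl)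
  qed simp
  with assms(1,3) show ?thesis by blast
qed

lemma und_connected_if_rooted:
  assumes "\<And>v. v \<in> verts S \<Longrightarrow> (s, v) \<in> (arcs S)\<^sup>*"
  shows "und_connected S"
  unfolding und_connected_def
proof (intro ballI)
  fix u v assume "u \<in> verts S" "v \<in> verts S"
  let ?R = "arcs S \<union> (arcs S)\<inverse>"
  have sub: "(arcs S)\<^sup>* \<subseteq> ?R\<^sup>*" by (rule rtrancl_mono) blast
  have "(u, s) \<in> (?R\<inverse>)\<^sup>*"
    using sub assms \<open>u \<in> verts S\<close> by (blast intro: rtrancl_converseI)
  moreover have "?R\<inverse> = ?R" by (simp add: converse_Un Un_commute)
  ultimately have "(u, s) \<in> ?R\<^sup>*" by simp
  moreover have "(s, v) \<in> ?R\<^sup>*" using sub assms \<open>v \<in> verts S\<close> by blast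
  ultimately show "(u, v) \<in> ?R\<^sup>*" by (rule rtrancl_trans)
qed

text \<open>A cycle has as many distinct arcs as vertices; with unique in-arcs their heads are
  distinct, so every vertex of the cycle is the head of one of its arcs.\<close>

lemma und_cycle_heads:
  assumes cycle: "und_cycle S vs as"
    and in_unique: "\<And>a c v. (a, v) \<in> arcs S \<Longrightarrow> (c, v) \<in> arcs S \<Longrightarrow> a = c"
  shows "snd ` set as = set vs" "fst ` set as \<subseteq> set vs"
proof -
  let ?n = "length vs"
  have len: "length as = ?n" and dist: "distinct vs" "distinct as" and arcs: "set as \<subseteq> arcs S"
    using cycle by (auto simp: und_cycle_def)
  have ends: "fst a \<in> set vs \<and> snd a \<in> set vs" if a: "a \<in> set as" for a
  proof -
    obtain i where i: "i < ?n" "a = as ! i" using a len by (auto simp: in_set_conv_nth)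
    then have "(i + 1) mod ?n < ?n" by (intro mod_less_divisor) linarith
    with i cycle show ?thesis by (auto simp: und_cycle_def)
  qed
  then show "fst ` set as \<subseteq> set vs" by blast
  have "inj_on snd (set as)"
    using arcs in_unique by (intro inj_onI) (metis prod.collapse subsetD)
  then have "card (snd ` set as) = card (set vs)"
    using len dist by (simp add: card_image distinct_card)
  moreover have "snd ` set as \<subseteq> set vs" using ends by blast
  ultimately show "snd ` set as = set vs" by (simp add: card_subset_eq)
qed

text \<open>The vertices of a cycle are then closed under taking in-neighbours, so a directed path
  from s into the cycle would have to start on it, but no arc enters s.\<close>

lemma no_und_cycle_if_rooted:
  assumes in_unique: "\<And>a c v. (a, v) \<in> arcs S \<Longrightarrow> (c, v) \<in> arcs S \<Longrightarrow> a = c"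
    and no_in_root: "\<And>u. (u, s) \<notin> arcs S"
    and reachable: "\<And>v. v \<in> verts S \<Longrightarrow> (s, v) \<in> (arcs S)\<^sup>*"
    and "arcs S \<subseteq> verts S \<times> verts S"
  shows "\<not> und_cycle S vs as"
proof
  assume cycle: "und_cycle S vs as"
  have arcs: "set as \<subseteq> arcs S" and "vs \<noteq> []"
    using cycle by (auto simp: und_cycle_def)
  have heads: "snd ` set as = set vs" "fst ` set as \<subseteq> set vs"
    using und_cycle_heads[OF cycle] in_unique by blast+
  have closed: "y \<in> set vs" if x: "x \<in> set vs" and yx: "(y, x) \<in> arcs S" for x y
  proof -
    obtain a where "a \<in> set as" "snd a = x" using heads(1) x by force
    moreover from this arcs have "(fst a, x) \<in> arcs S" by auto
    ultimately show ?thesis using heads(2) in_unique yx by blast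
  qed
  have "s \<notin> set vs"
    using heads(1) arcs no_in_root by force
  have off_cycle: "y \<notin> set vs" if "(s, y) \<in> (arcs S)\<^sup>*" for y
    using that
  proof (induction rule: rtrancl_induct)
    case base
    show ?case by fact
  next
    case (step y z)
    then show ?case using closed by blast
  qed
  have "hd vs \<in> set vs" using \<open>vs \<noteq> []\<close> by simp
  moreover then obtain a where "a \<in> set as" "snd a = hd vs" using heads(1) by force
  then have "hd vs \<in> verts S" using arcs assms(4) by force
  ultimately show False using off_cycle reachable by blast
qed

definition connects :: "'v sgraph \<Rightarrow> 'v \<Rightarrow> 'v set \<Rightarrow> bool" where
  "connects T s \<tau> \<longleftrightarrow> arcs T \<subseteq> verts T \<times> verts T \<and> s \<in> verts T \<and> \<tau> \<subseteq> verts T \<and>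
     (\<forall>t\<in>\<tau>. (s, t) \<in> (arcs T)\<^sup>*)"

locale minimal_connector =
  fixes T :: "'v sgraph" and s :: 'v and \<tau> :: "'v set"
  assumes connects: "connects T s \<tau>"
    and minimal: "\<And>T'. connects T' s \<tau> \<Longrightarrow> subgraph_of T' T \<Longrightarrow> T' = T"
begin

lemma arcs_within_verts: "arcs T \<subseteq> verts T \<times> verts T"
  and root_in_verts: "s \<in> verts T"
  and targets_in_verts: "\<tau> \<subseteq> verts T"
  and targets_reachable: "t \<in> \<tau> \<Longrightarrow> (s, t) \<in> (arcs T)\<^sup>*"
  using connects by (auto simp: connects_def)

lemma arc_essential:
  assumes "e \<in> arcs T"
  obtains t where "t \<in> \<tau>" "(s, t) \<notin> (arcs T - {e})\<^sup>*"
proof (rule ccontr)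
  assume "\<not> thesis"
  with that have "connects (verts T, arcs T - {e}) s \<tau>"
    using connects by (auto simp: connects_def)
  then have "(verts T, arcs T - {e}) = T"
    by (rule minimal) (auto simp: subgraph_of_def)
  then show False using assms by (metis Diff_iff arcs_pair singletonI)
qed

lemma vertex_essential:
  assumes "v \<in> verts T" "v \<noteq> s" "v \<notin> \<tau>"
  obtains t where "t \<in> \<tau>" "(s, t) \<notin> (avoiding v (arcs T))\<^sup>*"
proof (rule ccontr)
  assume "\<not> thesis"
  with that have "connects (verts T - {v}, avoiding v (arcs T)) s \<tau>"
    using connects assms by (auto simp: connects_def avoiding_def)
  then have "(verts T - {v}, avoiding v (arcs T)) = T"
    by (rule minimal) (auto simp: subgraph_of_def avoiding_def)
  then show False using assms(1) by (metis Diff_iff verts_pair singletonI)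
qed

lemma reachable_from_root:
  assumes "v \<in> verts T"
  shows "(s, v) \<in> (arcs T)\<^sup>*"
proof (rule ccontr)
  assume unreachable: "(s, v) \<notin> (arcs T)\<^sup>*"
  then have "v \<noteq> s" "v \<notin> \<tau>" using targets_reachable by auto
  then obtain t where "t \<in> \<tau>" "(s, t) \<notin> (avoiding v (arcs T))\<^sup>*"
    using vertex_essential assms by blast
  then show False
    using rtrancl_avoiding_unreachable[OF targets_reachable unreachable] by blast
qed

lemma no_arc_into_root: "(u, s) \<notin> arcs T"
proof
  assume "(u, s) \<in> arcs T"
  then obtain t where "t \<in> \<tau>" "(s, t) \<notin> (arcs T - {(u, s)})\<^sup>*"
    by (rule arc_essential)
  then show False
    using rtrancl_Diff_arc[OF targets_reachable rtrancl.rtrancl_refl] by blast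
qed

text \<open>If v had two in-arcs, one of them could be dropped: a path from s to v whose only arc
  into v is the last one survives the removal of the other.\<close>

lemma in_arc_unique:
  assumes "(a, v) \<in> arcs T" "(c, v) \<in> arcs T"
  shows "a = c"
proof (rule ccontr)
  assume "a \<noteq> c"
  have "(s, v) \<in> (arcs T)\<^sup>*"
    using assms(1) arcs_within_verts by (auto intro: reachable_from_root)
  moreover have "s \<noteq> v" using no_arc_into_root assms(1) by blast
  ultimately obtain u where u: "(s, u) \<in> {e \<in> arcs T. snd e \<noteq> v}\<^sup>*" "(u, v) \<in> arcs T"
    by (rule rtrancl_last_arc)
  obtain d where d: "(d, v) \<in> arcs T" "d \<noteq> u"
    using assms \<open>a \<noteq> c\<close> by metis
  have "{e \<in> arcs T. snd e \<noteq> v} \<subseteq> arcs T - {(d, v)}" by auto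
  with u(1) have "(s, u) \<in> (arcs T - {(d, v)})\<^sup>*" using rtrancl_mono by blast
  moreover have "(u, v) \<in> arcs T - {(d, v)}" using u(2) d(2) by auto
  ultimately have "(s, v) \<in> (arcs T - {(d, v)})\<^sup>*" by (rule rtrancl.rtrancl_into_rtrancl)
  moreover obtain t where "t \<in> \<tau>" "(s, t) \<notin> (arcs T - {(d, v)})\<^sup>*"
    using d(1) by (rule arc_essential)
  ultimately show False using rtrancl_Diff_arc[OF targets_reachable] by blast
qed

lemma sink_in_targets:
  assumes "v \<in> verts T" "v \<noteq> s" "\<And>x. (v, x) \<notin> arcs T"
  shows "v \<in> \<tau>"
proof (rule ccontr)
  assume "v \<notin> \<tau>"
  then obtain t where "t \<in> \<tau>" "(s, t) \<notin> (avoiding v (arcs T))\<^sup>*"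
    using vertex_essential assms(1,2) by blast
  with \<open>v \<notin> \<tau>\<close> show False
    using rtrancl_avoiding_sink[OF targets_reachable assms(2)[symmetric] _ assms(3)] by blast
qed

lemma in_steiner_trees:
  assumes "is_subgraph V E T"
  shows "T \<in> steiner_trees V E \<tau> s"
  unfolding steiner_trees_def out_arborescence_def und_tree_def
proof (intro CollectI conjI ballI impI)
  show "is_subgraph V E T" by fact
  show "verts T \<noteq> {}" using root_in_verts by blast
  show "und_connected T" using reachable_from_root by (rule und_connected_if_rooted)
  show "\<nexists>vs as. und_cycle T vs as"
    using no_und_cycle_if_rooted[of T s] in_arc_unique no_arc_into_root reachable_from_root
      arcs_within_verts by blast
  show "s \<in> verts T" by (rule root_in_verts)
  show "card {u. (u, s) \<in> arcs T} = 0" using no_arc_into_root by simp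
  show "\<tau> \<subseteq> verts T" by (rule targets_in_verts)
next
  fix v assume "v \<in> verts T - {s}"
  then obtain u where "(u, v) \<in> arcs T"
    using reachable_from_root by (metis DiffE insertI1 rtranclE)
  then have "{u. (u, v) \<in> arcs T} = {u}" using in_arc_unique by blast
  then show "card {u. (u, v) \<in> arcs T} = 1" by simp
next
  fix v assume "v \<in> verts T - {s}" "\<nexists>x. (v, x) \<in> arcs T"
  then show "v \<in> \<tau>" using sink_in_targets by blast
qed

end

lemma ex_minimal_connector:
  assumes "connects S s \<tau>" "finite (verts S)"
  obtains T where "subgraph_of T S" "minimal_connector T s \<tau>"
proof -
  define card_sum where "card_sum T = card (verts T) + card (arcs T)" for T :: "'a sgraph"
  obtain T where T: "connects T s \<tau>" "subgraph_of T S"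
    and least: "\<And>T'. connects T' s \<tau> \<and> subgraph_of T' S \<Longrightarrow> card_sum T \<le> card_sum T'"
    using ex_has_least_nat[of "\<lambda>T. connects T s \<tau> \<and> subgraph_of T S" S card_sum] assms(1)
    by (auto simp: subgraph_of_def)
  have "finite (verts T)" using T(2) assms(2) by (auto simp: subgraph_of_def intro: finite_subset)
  moreover have "arcs T \<subseteq> verts T \<times> verts T" using T(1) by (simp add: connects_def)
  ultimately have finite: "finite (verts T)" "finite (arcs T)" by (auto intro: finite_subset)
  have "minimal_connector T s \<tau>"
  proof
    show "connects T s \<tau>" by fact
    fix T' assume T': "connects T' s \<tau>" "subgraph_of T' T"
    then have "card_sum T \<le> card_sum T'"
      using T(2) by (intro least) (auto simp: subgraph_of_def)
    moreover have "card (verts T') \<le> card (verts T)" "card (arcs T') \<le> card (arcs T)"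
      using T'(2) finite by (auto simp: subgraph_of_def intro: card_mono)
    ultimately have "card (verts T') = card (verts T)" "card (arcs T') = card (arcs T)"
      by (simp_all add: card_sum_def)
    then have "verts T' = verts T" "arcs T' = arcs T"
      using T'(2) finite by (simp_all add: subgraph_of_def card_subset_eq)
    then show "T' = T" by (simp add: verts_def arcs_def prod_eq_iff)
  qed
  with T(2) that show thesis by blast
qed

text \<open>An undirected walk from s can be followed along directed arcs: a backward step out of
  y \<noteq> s uses the unique in-arc of y, which is the last arc of a directed path from s to y.\<close>

lemma out_arborescence_reachable:
  assumes "out_arborescence S s" "finite (arcs S)" "arcs S \<subseteq> verts S \<times> verts S"
    and "v \<in> verts S"
  shows "(s, v) \<in> (arcs S)\<^sup>*"
proof -
  have in_finite: "finite {u. (u, x) \<in> arcs S}" for x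
    using assms(2) by (rule finite_subset[rotated, OF finite_imageI[of _ fst]]) force
  have no_in_root: "(u, s) \<notin> arcs S" for u
    using assms(1) in_finite[of s] by (auto simp: out_arborescence_def)
  have step: "(s, z) \<in> (arcs S)\<^sup>*"
    if y: "(s, y) \<in> (arcs S)\<^sup>*" and yz: "(y, z) \<in> arcs S \<union> (arcs S)\<inverse>" for y z
  proof (cases "(y, z) \<in> arcs S")
    case True
    with y show ?thesis by (rule rtrancl.rtrancl_into_rtrancl)
  next
    case False
    with yz have zy: "(z, y) \<in> arcs S" by simp
    then have "y \<noteq> s" using no_in_root by blast
    moreover have "y \<in> verts S" using zy assms(3) by auto
    ultimately have one: "card {u. (u, y) \<in> arcs S} = 1"
      using assms(1) by (auto simp: out_arborescence_def)
    from y \<open>y \<noteq> s\<close> obtain p where p: "(s, p) \<in> (arcs S)\<^sup>*" "(p, y) \<in> arcs S"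
      by (metis rtranclE)
    have "p = z" using one p(2) zy by (metis card_1_singletonE mem_Collect_eq singletonD)
    with p(1) show ?thesis by simp
  qed
  have "(s, v) \<in> (arcs S \<union> (arcs S)\<inverse>)\<^sup>*"
    using assms(1,4) by (auto simp: out_arborescence_def und_tree_def und_connected_def)
  then show ?thesis
    by (induction rule: rtrancl_induct) (auto intro: step)
qed

lemma feasible_connects:
  assumes "feasible V E w \<tau> s b S"
  shows "connects S s \<tau>"
  using assms reachable_iff_rtrancl[of S]
  by (auto simp: feasible_def connects_def is_subgraph_def)

lemma steiner_tree_feasible:
  assumes "finite V" "T \<in> steiner_trees V E \<tau> s" "cost w T \<le> b"
  shows "feasible V E w \<tau> s b T"
proof -
  have sub: "is_subgraph V E T" and root: "s \<in> verts T" and targets: "\<tau> \<subseteq> verts T"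
    and tree: "out_arborescence T s"
    using assms(2) by (auto simp: steiner_trees_def out_arborescence_def)
  have arcs: "arcs T \<subseteq> verts T \<times> verts T" using sub by (simp add: is_subgraph_def)
  moreover have "finite (verts T)" using sub assms(1) by (auto simp: is_subgraph_def intro: finite_subset)
  ultimately have "finite (arcs T)" by (auto intro: finite_subset)
  with tree arcs targets have "\<forall>t\<in>\<tau>. (s, t) \<in> (arcs T)\<^sup>*"
    by (auto intro: out_arborescence_reachable)
  with sub root targets assms(3) show ?thesis
    by (simp add: feasible_def reachable_iff_rtrancl[OF arcs])
qed

lemma steiner_tree_dominates:
  assumes "finite V" "\<forall>e\<in>E. w e \<ge> 0" "finite \<tau>" "card \<tau> \<ge> 2"
    and feasible: "feasible V E w \<tau> s b S"
  obtains T where "T \<in> steiner_trees V E \<tau> s" "cost w T \<le> cost w S" "CD w \<tau> s S \<le> CD w \<tau> s T"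
proof -
  have sub: "is_subgraph V E S" using feasible by (simp add: feasible_def)
  then have "finite (verts S)" "arcs S \<subseteq> verts S \<times> verts S"
    using assms(1) by (auto simp: is_subgraph_def intro: finite_subset)
  then have finite_arcs: "finite (arcs S)" by (auto intro: finite_subset)
  have nonneg: "\<forall>e\<in>arcs S. w e \<ge> 0" using sub assms(2) by (auto simp: is_subgraph_def)
  obtain T where T: "subgraph_of T S" "minimal_connector T s \<tau>"
    using ex_minimal_connector[OF feasible_connects[OF feasible] \<open>finite (verts S)\<close>] by blast
  interpret minimal_connector T s \<tau> by (fact T(2))
  have "is_subgraph V E T"
    using T(1) sub arcs_within_verts by (auto simp: subgraph_of_def is_subgraph_def)
  then have "T \<in> steiner_trees V E \<tau> s" by (rule in_steiner_trees)
  moreover have "cost w T \<le> cost w S"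
    unfolding cost_def using T(1) nonneg finite_arcs by (intro sum_mono2) (auto simp: subgraph_of_def)
  moreover have "\<forall>t\<in>\<tau>. reachable T s t"
    using targets_reachable root_in_verts by (simp add: reachable_iff_rtrancl[OF arcs_within_verts])
  then have "CD w \<tau> s S \<le> CD w \<tau> s T"
    using T(1) nonneg assms(3,4) by (intro CD_antimono)
  ultimately show thesis by (rule that)
qed

lemma Max_eq_if_dominated:
  fixes A B :: "'a :: linorder set"
  assumes "finite A" "A \<noteq> {}" "B \<subseteq> A" "\<And>x. x \<in> A \<Longrightarrow> \<exists>y\<in>B. x \<le> y"
  shows "Max B = Max A" "Max A \<in> B"
proof -
  obtain y where y: "y \<in> B" "Max A \<le> y" using assms(4) Max_in[OF assms(1,2)] by blast
  moreover have "y \<le> Max A" using y(1) assms(1,3) by auto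
  ultimately show "Max A \<in> B" by simp
  then show "Max B = Max A"
    using assms(1,3) by (intro antisym Max_mono Max_ge) (auto intro: finite_subset)
qed

theorem theorem1:
  fixes V :: "'v set" and E :: "('v \<times> 'v) set" and w :: "'v \<times> 'v \<Rightarrow> real"
    and s :: 'v and \<tau> :: "'v set" and b :: real
  assumes "finite V" and "E \<subseteq> V \<times> V" and "\<forall>e\<in>E. w e \<ge> 0"
    and "s \<in> V" and "\<tau> \<subseteq> V - {s}" and "card \<tau> \<ge> 2" and "b \<ge> 0"
    and "\<exists>S. feasible V E w \<tau> s b S"
  shows "Max {CD w \<tau> s S | S. feasible V E w \<tau> s b S}
           = Max {CD w \<tau> s S | S. S \<in> steiner_trees V E \<tau> s \<and> cost w S \<le> b}
         \<and> (\<exists>Sopt. Sopt \<in> steiner_trees V E \<tau> s \<and> cost w Sopt \<le> b \<and>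
              CD w \<tau> s Sopt = Max {CD w \<tau> s S | S. feasible V E w \<tau> s b S})"
proof -
  let ?F = "{CD w \<tau> s S | S. feasible V E w \<tau> s b S}"
  let ?T = "{CD w \<tau> s S | S. S \<in> steiner_trees V E \<tau> s \<and> cost w S \<le> b}"
  have "finite \<tau>" using assms(6) by (metis card.infinite not_numeral_le_zero)
  have "finite E" using assms(1,2) by (auto intro: finite_subset)
  then have "?F \<subseteq> CD w \<tau> s ` (Pow V \<times> Pow E)"
    by (force simp: feasible_def is_subgraph_def verts_def arcs_def)
  then have "finite ?F"
    by (rule finite_subset) (use assms(1) \<open>finite E\<close> in simp)
  moreover have "?F \<noteq> {}" using assms(8) by blast
  moreover have "?T \<subseteq> ?F" using steiner_tree_feasible[OF assms(1)] by blast
  moreover have "\<exists>y\<in>?T. x \<le> y" if "x \<in> ?F" for x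
  proof -
    obtain S where S: "feasible V E w \<tau> s b S" "x = CD w \<tau> s S" using \<open>x \<in> ?F\<close> by blast
    then obtain T where "T \<in> steiner_trees V E \<tau> s" "cost w T \<le> cost w S" "x \<le> CD w \<tau> s T"
      using steiner_tree_dominates[OF assms(1,3) \<open>finite \<tau>\<close> assms(6)] by metis
    moreover have "cost w T \<le> b" using S(1) \<open>cost w T \<le> cost w S\<close> by (simp add: feasible_def)
    ultimately show ?thesis by blast
  qed
  ultimately have max_eq: "Max ?T = Max ?F" and "Max ?F \<in> ?T"
    by (rule Max_eq_if_dominated, blast)+
  from \<open>Max ?F \<in> ?T\<close> obtain Sopt where
    "Sopt \<in> steiner_trees V E \<tau> s" "cost w Sopt \<le> b" "CD w \<tau> s Sopt = Max ?F"
    unfolding mem_Collect_eq by metis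
  with max_eq[symmetric] show ?thesis by (intro conjI exI[of _ Sopt]) assumption+
qed

end
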